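(* Let $G$ be a subgroup of $\mathrm{Aut}(T)$, $X$ a minimal compact $G$-space and $\Phi:X\to\mathrm{Sub}(G)$ a lower semi-continuous $G$-equivariant map. Then the map $X\to\mathcal{F}(\partial T)$, $x\mapsto\mathrm{Fix}(\Phi(x))$, is continuous.
   Context: $T$ is a locally finite rooted tree, $\mathrm{Aut}(T)$ its root-fixing automorphism group, and $\partial T$ its boundary. $\mathrm{Sub}(G)$ is the space of subgroups of $G$ with the Chabauty topology (product topology on $\{0,1\}^G$) and conjugation action. $\Phi$ is lower semi-continuous if for every $g\in G$ the set $\{x\in X:g\in\Phi(x)\}$ is open. $\mathcal{F}(\partial T)$ is the space of closed subsets of $\partial T$ with the Hausdorff (Vietoris) topology, and $\mathrm{Fix}(H)$ denotes the set of points of $\partial T$ fixed by $H$. *)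

theory Defs
  imports "HOL-Analysis.Analysis"
begin

text \<open>A rooted tree is a set of finite words over 'a, closed under taking prefixes;
  the root is the empty word, and the children of v are the words v @ [a] in T.\<close>

definition rooted_tree :: "'a list set \<Rightarrow> bool" where
  "rooted_tree T \<longleftrightarrow> [] \<in> T \<and> (\<forall>v a. v @ [a] \<in> T \<longrightarrow> v \<in> T)"

definition locally_finite_tree :: "'a list set \<Rightarrow> bool" where
  "locally_finite_tree T \<longleftrightarrow> rooted_tree T \<and> (\<forall>v\<in>T. finite {a. v @ [a] \<in> T})"

definition tree_adj :: "'a list set \<Rightarrow> 'a list \<Rightarrow> 'a list \<Rightarrow> bool" where
  "tree_adj T v w \<longleftrightarrow> v \<in> T \<and> w \<in> T \<and> (\<exists>a. w = v @ [a] \<or> v = w @ [a])"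

text \<open>Root-fixing automorphisms of T, as maps on all words that are the identity off T.\<close>

definition tree_aut :: "'a list set \<Rightarrow> ('a list \<Rightarrow> 'a list) set" where
  "tree_aut T = {g. bij_betw g T T \<and> g [] = []
      \<and> (\<forall>v\<in>T. \<forall>w\<in>T. tree_adj T v w \<longleftrightarrow> tree_adj T (g v) (g w))
      \<and> (\<forall>v. v \<notin> T \<longrightarrow> g v = v)}"

definition is_subgroup :: "('b \<Rightarrow> 'b) set \<Rightarrow> ('b \<Rightarrow> 'b) set \<Rightarrow> bool" where
  "is_subgroup H A \<longleftrightarrow> H \<subseteq> A \<and> id \<in> H \<and> (\<forall>g\<in>H. \<forall>h\<in>H. g \<circ> h \<in> H)
      \<and> (\<forall>g\<in>H. inv g \<in> H)"

definition tree_boundary :: "'a list set \<Rightarrow> (nat \<Rightarrow> 'a) set" where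
  "tree_boundary T = {\<xi>. \<forall>n. map \<xi> [0..<n] \<in> T}"

definition boundary_topology :: "'a list set \<Rightarrow> (nat \<Rightarrow> 'a) topology" where
  "boundary_topology T =
     subtopology (product_topology (\<lambda>_. discrete_topology UNIV) UNIV) (tree_boundary T)"

text \<open>Points of the boundary fixed by every element of H (h fixes the ray iff it
  fixes every vertex on it).\<close>

definition Fix :: "'a list set \<Rightarrow> ('a list \<Rightarrow> 'a list) set \<Rightarrow> (nat \<Rightarrow> 'a) set" where
  "Fix T H = {\<xi> \<in> tree_boundary T. \<forall>h\<in>H. \<forall>n. h (map \<xi> [0..<n]) = map \<xi> [0..<n]}"

definition vietoris :: "'a topology \<Rightarrow> 'a set topology" where
  "vietoris S = topology_generated_by
     ({{F. closedin S F \<and> F \<subseteq> U} | U. openin S U}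
      \<union> {{F. closedin S F \<and> F \<inter> U \<noteq> {}} | U. openin S U})"

text \<open>G-space: G acts on X by homeomorphisms (G carries the discrete topology).\<close>

definition G_space :: "('b \<Rightarrow> 'b) set \<Rightarrow> 'x topology \<Rightarrow> (('b \<Rightarrow> 'b) \<Rightarrow> 'x \<Rightarrow> 'x) \<Rightarrow> bool" where
  "G_space G X act \<longleftrightarrow>
     (\<forall>g\<in>G. continuous_map X X (act g))
     \<and> (\<forall>x\<in>topspace X. act id x = x)
     \<and> (\<forall>g\<in>G. \<forall>h\<in>G. \<forall>x\<in>topspace X. act (g \<circ> h) x = act g (act h x))"

definition minimal_G_space :: "('b \<Rightarrow> 'b) set \<Rightarrow> 'x topology \<Rightarrow> (('b \<Rightarrow> 'b) \<Rightarrow> 'x \<Rightarrow> 'x) \<Rightarrow> bool" where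
  "minimal_G_space G X act \<longleftrightarrow> G_space G X act \<and>
     (\<forall>Y. closedin X Y \<and> Y \<noteq> {} \<and> (\<forall>g\<in>G. act g ` Y \<subseteq> Y) \<longrightarrow> Y = topspace X)"

end

theory Submission
  imports Defs
begin

(* Upper semicontinuity of x \<mapsto> Fix(\<Phi> x) comes from compactness of \<partial>T: Fix(\<Phi> x) is the
   intersection of the closed sets Fix{h}, h \<in> \<Phi> x, so it lies in an open U as soon as finitely
   many of them do, and by lower semicontinuity of \<Phi> those finitely many h stay in \<Phi> y for y
   near x.  For lower semicontinuity look at the finite set S\<^sub>n(x) of length-n prefixes of rays
   in Fix(\<Phi> x).  Upper semicontinuity makes S\<^sub>n locally shrinking, so |S\<^sub>n| is upper
   semicontinuous; equivariance makes |S\<^sub>n| non-decreasing along G-orbits, and minimality then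
   forces it to be constant.  A locally shrinking map of constant finite cardinality is locally
   constant, so every cylinder met by Fix(\<Phi> x) is met by Fix(\<Phi> y) for y near x. *)

section \<open>Cylinders and compactness of the boundary\<close>

lemma topspace_boundary_topology [simp]: "topspace (boundary_topology T) = tree_boundary T"
  by (simp add: boundary_topology_def)

lemma openin_product_discrete_prefix:
  "openin (product_topology (\<lambda>_. discrete_topology UNIV) UNIV) {\<eta>. Q (map \<eta> [0..<n])}"
  unfolding openin_product_topology_alt
proof (intro ballI)
  fix \<eta> assume \<eta>: "\<eta> \<in> {\<eta>. Q (map \<eta> [0..<n])}"
  define U where "U = (\<lambda>i::nat. if i < n then {\<eta> i} else UNIV)"
  have "finite {i \<in> UNIV. U i \<noteq> topspace (discrete_topology UNIV)}"
    by (rule finite_subset[of _ "{..<n}"]) (auto simp: U_def)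
  moreover have "\<eta> \<in> Pi\<^sub>E UNIV U" by (auto simp: U_def)
  moreover have "Pi\<^sub>E UNIV U \<subseteq> {\<eta>. Q (map \<eta> [0..<n])}"
  proof
    fix \<zeta> assume "\<zeta> \<in> Pi\<^sub>E UNIV U"
    then have "\<forall>i. \<zeta> i \<in> U i" by (auto simp: PiE_iff)
    then have "\<forall>i<n. \<zeta> i = \<eta> i" by (metis U_def singletonD)
    then have "map \<zeta> [0..<n] = map \<eta> [0..<n]" by simp
    then show "\<zeta> \<in> {\<eta>. Q (map \<eta> [0..<n])}" using \<eta> by (simp only: mem_Collect_eq)
  qed
  ultimately show "\<exists>U. finite {i \<in> UNIV. U i \<noteq> topspace (discrete_topology UNIV)} \<and>
      (\<forall>i\<in>UNIV. openin (discrete_topology UNIV) (U i)) \<and> \<eta> \<in> Pi\<^sub>E UNIV U \<and>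
      Pi\<^sub>E UNIV U \<subseteq> {\<eta>. Q (map \<eta> [0..<n])}"
    by auto
qed

lemma closedin_product_discrete_prefix:
  "closedin (product_topology (\<lambda>_. discrete_topology UNIV) UNIV) {\<eta>. Q (map \<eta> [0..<n])}"
  using openin_product_discrete_prefix [of "\<lambda>v. \<not> Q v" n]
  by (simp add: closedin_def Collect_neg_eq Compl_eq_Diff_UNIV)

lemma openin_boundary_prefix:
  "openin (boundary_topology T) {\<eta> \<in> tree_boundary T. Q (map \<eta> [0..<n])}"
proof -
  have "{\<eta> \<in> tree_boundary T. Q (map \<eta> [0..<n])} = tree_boundary T \<inter> {\<eta>. Q (map \<eta> [0..<n])}"
    by auto
  then show ?thesis
    unfolding boundary_topology_def by (metis openin_subtopology_Int2 openin_product_discrete_prefix)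
qed

lemma openin_boundary_contains_cylinder:
  assumes "openin (boundary_topology T) U" "\<xi> \<in> U"
  obtains n where "\<And>\<eta>. \<eta> \<in> tree_boundary T \<Longrightarrow> map \<eta> [0..<n] = map \<xi> [0..<n] \<Longrightarrow> \<eta> \<in> U"
proof -
  obtain V where V: "openin (product_topology (\<lambda>_. discrete_topology UNIV) UNIV) V"
      "U = V \<inter> tree_boundary T"
    using assms(1) unfolding boundary_topology_def openin_subtopology by blast
  then obtain W where W: "finite {i \<in> UNIV. W i \<noteq> topspace (discrete_topology (UNIV::'a set))}"
      "\<xi> \<in> Pi\<^sub>E UNIV W" "Pi\<^sub>E UNIV W \<subseteq> V"
    using assms(2) unfolding openin_product_topology_alt by blast
  then have "finite {i. W i \<noteq> UNIV}" by simp
  then obtain n where n: "{i. W i \<noteq> UNIV} \<subseteq> {..<n}" using finite_nat_bounded by blast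
  show thesis
  proof
    fix \<eta> assume \<eta>: "\<eta> \<in> tree_boundary T" "map \<eta> [0..<n] = map \<xi> [0..<n]"
    have "\<eta> i \<in> W i" for i
      using W(2) n \<eta>(2) by (cases "i < n") (auto simp: PiE_iff)
    then show "\<eta> \<in> U" using W(3) V(2) \<eta>(1) by auto
  qed
qed

lemma closedin_Fix: "closedin (boundary_topology T) (Fix T H)"
  unfolding closedin_def topspace_boundary_topology
proof
  show "Fix T H \<subseteq> tree_boundary T" by (auto simp: Fix_def)
  show "openin (boundary_topology T) (tree_boundary T - Fix T H)"
  proof (subst openin_subopen, intro ballI)
    fix \<eta> assume "\<eta> \<in> tree_boundary T - Fix T H"
    then obtain h n where h: "h \<in> H" "h (map \<eta> [0..<n]) \<noteq> map \<eta> [0..<n]" "\<eta> \<in> tree_boundary T"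
      by (auto simp: Fix_def)
    let ?C = "{\<zeta> \<in> tree_boundary T. map \<zeta> [0..<n] = map \<eta> [0..<n]}"
    have "openin (boundary_topology T) ?C" by (rule openin_boundary_prefix)
    moreover have "?C \<subseteq> tree_boundary T - Fix T H"
    proof
      fix \<zeta> assume \<zeta>: "\<zeta> \<in> ?C"
      then have "h (map \<zeta> [0..<n]) \<noteq> map \<zeta> [0..<n]" using h(2) by (simp del: map_eq_conv)
      then show "\<zeta> \<in> tree_boundary T - Fix T H" using \<zeta> h(1) by (auto simp: Fix_def)
    qed
    ultimately show "\<exists>C. openin (boundary_topology T) C \<and> \<eta> \<in> C \<and> C \<subseteq> tree_boundary T - Fix T H"
      using h(3) by blast
  qed
qed

lemma Fix_eq_Inter_Fix_singleton:
  "Fix T H = tree_boundary T \<inter> (\<Inter>h\<in>H. Fix T {h})"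
  by (auto simp: Fix_def)

lemma finite_tree_level:
  assumes "locally_finite_tree T"
  shows "finite {v\<in>T. length v = n}"
proof (induction n)
  case 0
  then show ?case by (rule finite_subset [of _ "{[]}"]) auto
next
  case (Suc n)
  have "{v\<in>T. length v = Suc n} \<subseteq> (\<Union>w\<in>{v\<in>T. length v = n}. (\<lambda>a. w @ [a]) ` {a. w @ [a] \<in> T})"
  proof
    fix v assume v: "v \<in> {v\<in>T. length v = Suc n}"
    then have v_snoc: "v = butlast v @ [last v]" by (cases v rule: rev_cases) auto
    then have "butlast v \<in> T"
      using v assms unfolding locally_finite_tree_def rooted_tree_def by (metis mem_Collect_eq)
    then show "v \<in> (\<Union>w\<in>{v\<in>T. length v = n}. (\<lambda>a. w @ [a]) ` {a. w @ [a] \<in> T})"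
      using v v_snoc by (intro UN_I [of "butlast v"]) (auto intro: image_eqI [of _ _ "last v"])
  qed
  moreover have "finite (\<Union>w\<in>{v\<in>T. length v = n}. (\<lambda>a. w @ [a]) ` {a. w @ [a] \<in> T})"
    using Suc assms unfolding locally_finite_tree_def by auto
  ultimately show ?case by (rule finite_subset)
qed

lemma compact_space_boundary_topology:
  assumes "locally_finite_tree T"
  shows "compact_space (boundary_topology T)"
proof -
  let ?P = "product_topology (\<lambda>_::nat. discrete_topology (UNIV::'a set)) UNIV"
  define L where "L n = (\<lambda>v. v ! n) ` {v\<in>T. length v = Suc n}" for n
  have "tree_boundary T \<subseteq> Pi\<^sub>E UNIV L"
  proof
    fix \<xi> assume "\<xi> \<in> tree_boundary T"
    then have "map \<xi> [0..<Suc n] \<in> T" for n unfolding tree_boundary_def by blast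
    then have "\<xi> n \<in> L n" for n unfolding L_def
      by (intro image_eqI [of _ _ "map \<xi> [0..<Suc n]"]) (auto simp del: upt_Suc)
    then show "\<xi> \<in> Pi\<^sub>E UNIV L" by auto
  qed
  moreover have "compactin ?P (Pi\<^sub>E UNIV L)"
    unfolding compactin_PiE
    using finite_tree_level [OF assms] by (auto simp: L_def intro!: finite_imp_compactin)
  moreover have "closedin ?P (tree_boundary T)"
  proof -
    have "tree_boundary T = (\<Inter>n. {\<eta>. map \<eta> [0..<n] \<in> T})"
      by (auto simp: tree_boundary_def)
    then show ?thesis by (auto intro: closedin_product_discrete_prefix)
  qed
  ultimately have "compactin ?P (tree_boundary T)" by (meson closed_compactin)
  then show ?thesis unfolding boundary_topology_def by (rule compact_space_subtopology)
qed

section \<open>Automorphisms acting on rays\<close>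

lemma tree_aut_in_tree: "g \<in> tree_aut T \<Longrightarrow> v \<in> T \<Longrightarrow> g v \<in> T"
  unfolding tree_aut_def bij_betw_def by auto

lemma tree_aut_inj:
  assumes "g \<in> tree_aut T"
  shows "inj g"
proof (rule injI)
  fix v w assume eq: "g v = g w"
  have bij: "bij_betw g T T" and off: "\<And>v. v \<notin> T \<Longrightarrow> g v = v"
    using assms by (auto simp: tree_aut_def)
  show "v = w"
  proof (cases "v \<in> T"; cases "w \<in> T")
    assume "v \<in> T" "w \<in> T"
    then show ?thesis using bij eq by (auto simp: bij_betw_def inj_on_def)
  next
    assume "v \<in> T" "w \<notin> T"
    then show ?thesis using eq off tree_aut_in_tree [OF assms, of v] by auto
  next
    assume "v \<notin> T" "w \<in> T"
    then show ?thesis using eq off tree_aut_in_tree [OF assms, of w] by auto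
  next
    assume "v \<notin> T" "w \<notin> T"
    then show ?thesis using eq off by auto
  qed
qed

lemma tree_aut_length_butlast:
  assumes "rooted_tree T" "g \<in> tree_aut T" "v \<in> T"
  shows "length (g v) = length v \<and> (v \<noteq> [] \<longrightarrow> g (butlast v) = butlast (g v))"
  using assms(3)
proof (induction v rule: rev_induct)
  case Nil
  then show ?case using assms(2) by (simp add: tree_aut_def)
next
  case (snoc a w)
  have wT: "w \<in> T" using snoc assms(1) unfolding rooted_tree_def by blast
  have IH: "length (g w) = length w" "w \<noteq> [] \<longrightarrow> g (butlast w) = butlast (g w)"
    using snoc wT by auto
  have "tree_adj T w (w @ [a])" using wT snoc unfolding tree_adj_def by auto
  then have "tree_adj T (g w) (g (w @ [a]))" using assms(2) wT snoc unfolding tree_aut_def by blast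
  then obtain b where "g (w @ [a]) = g w @ [b] \<or> g w = g (w @ [a]) @ [b]"
    unfolding tree_adj_def by blast
  moreover have "g w \<noteq> g (w @ [a]) @ [b]"
  proof
    assume up: "g w = g (w @ [a]) @ [b]"
    moreover have "g [] = []" using assms(2) by (simp add: tree_aut_def)
    ultimately have "w \<noteq> []" by auto
    then have "g (butlast w) = g (w @ [a])" using IH up by simp
    then have "butlast w = w @ [a]" using tree_aut_inj [OF assms(2)] by (simp add: inj_eq)
    then have "length w - 1 = Suc (length w)" by (metis length_append_singleton length_butlast)
    then show False by simp
  qed
  ultimately show ?case using IH by auto
qed

lemma tree_aut_take:
  assumes "rooted_tree T" "g \<in> tree_aut T" "v \<in> T"
  shows "g (take k v) = take k (g v)"
  using assms(3)
proof (induction v arbitrary: k rule: rev_induct)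
  case Nil
  then show ?case using assms(2) by (simp add: tree_aut_def)
next
  case (snoc a w)
  have wT: "w \<in> T" using snoc assms(1) unfolding rooted_tree_def by blast
  have len: "length (g (w @ [a])) = Suc (length w)" and parent: "g w = butlast (g (w @ [a]))"
    using tree_aut_length_butlast [OF assms(1,2) snoc(2)] by auto
  show ?case
  proof (cases "k \<le> length w")
    case True
    then have "take k (g (w @ [a])) = take k (g w)" using len parent by (simp add: take_butlast)
    then show ?thesis using snoc.IH [OF wT] True by simp
  next
    case False
    then show ?thesis using len by simp
  qed
qed

definition ray_act :: "('a list \<Rightarrow> 'a list) \<Rightarrow> (nat \<Rightarrow> 'a) \<Rightarrow> (nat \<Rightarrow> 'a)" where
  "ray_act g \<xi> = (\<lambda>n. g (map \<xi> [0..<Suc n]) ! n)"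

lemma map_ray_act:
  assumes "rooted_tree T" "g \<in> tree_aut T" "\<xi> \<in> tree_boundary T"
  shows "map (ray_act g \<xi>) [0..<n] = g (map \<xi> [0..<n])"
proof (rule nth_equalityI)
  have prefix_in_T: "map \<xi> [0..<m] \<in> T" for m using assms(3) unfolding tree_boundary_def by blast
  show "length (map (ray_act g \<xi>) [0..<n]) = length (g (map \<xi> [0..<n]))"
    using tree_aut_length_butlast [OF assms(1,2) prefix_in_T] by simp
  fix i assume "i < length (map (ray_act g \<xi>) [0..<n])"
  then have i: "i < n" by simp
  then have "map \<xi> [0..<Suc i] = take (Suc i) (map \<xi> [0..<n])" by (simp add: take_map)
  then have "g (map \<xi> [0..<Suc i]) = take (Suc i) (g (map \<xi> [0..<n]))"
    using tree_aut_take [OF assms(1,2) prefix_in_T] by simp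
  then show "map (ray_act g \<xi>) [0..<n] ! i = g (map \<xi> [0..<n]) ! i"
    using i by (simp add: ray_act_def del: upt_Suc)
qed

lemma ray_act_in_Fix_conj:
  assumes "rooted_tree T" "g \<in> tree_aut T" "\<xi> \<in> Fix T H"
  shows "ray_act g \<xi> \<in> Fix T ((\<lambda>h. g \<circ> h \<circ> inv g) ` H)"
  unfolding Fix_def
proof (intro CollectI conjI ballI allI)
  have \<xi>: "\<xi> \<in> tree_boundary T" using assms(3) by (simp add: Fix_def)
  note map_act = map_ray_act [OF assms(1,2) \<xi>]
  show "ray_act g \<xi> \<in> tree_boundary T"
    using \<xi> tree_aut_in_tree [OF assms(2)] by (simp add: tree_boundary_def map_act)
  fix k n assume "k \<in> (\<lambda>h. g \<circ> h \<circ> inv g) ` H"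
  then obtain h where h: "h \<in> H" "k = g \<circ> h \<circ> inv g" by blast
  have "h (map \<xi> [0..<n]) = map \<xi> [0..<n]" using assms(3) h(1) unfolding Fix_def by blast
  then show "k (map (ray_act g \<xi>) [0..<n]) = map (ray_act g \<xi>) [0..<n]"
    using tree_aut_inj [OF assms(2)] unfolding map_act h(2) by simp
qed

section \<open>Semicontinuity of set-valued maps\<close>

lemma openin_Inter_closed_subset:
  assumes "compact_space B"
    and closed: "\<And>h. closedin B (C h)"
    and lsc: "\<And>x h. x \<in> topspace X \<Longrightarrow> h \<in> \<Phi> x \<Longrightarrow> openin X {y \<in> topspace X. h \<in> \<Phi> y}"
    and "openin B U"
  shows "openin X {x \<in> topspace X. topspace B \<inter> (\<Inter>h\<in>\<Phi> x. C h) \<subseteq> U}"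
proof (subst openin_subopen, intro ballI)
  fix x assume x: "x \<in> {x \<in> topspace X. topspace B \<inter> (\<Inter>h\<in>\<Phi> x. C h) \<subseteq> U}"
  have "compactin B (topspace B - U)"
    using assms(1,4) by (simp add: closedin_compact_space closedin_diff)
  moreover have "\<forall>V \<in> (\<lambda>h. topspace B - C h) ` \<Phi> x. openin B V"
    using closed by blast
  moreover have "topspace B - U \<subseteq> \<Union> ((\<lambda>h. topspace B - C h) ` \<Phi> x)"
    using x by blast
  ultimately obtain \<F> where "finite \<F>" "\<F> \<subseteq> (\<lambda>h. topspace B - C h) ` \<Phi> x"
      "topspace B - U \<subseteq> \<Union> \<F>"
    unfolding compactin_def by meson
  then obtain K where K: "finite K" "K \<subseteq> \<Phi> x"
      "topspace B - U \<subseteq> \<Union> ((\<lambda>h. topspace B - C h) ` K)"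
    using finite_subset_image by metis
  define V where "V = (\<Inter>h\<in>K. {y \<in> topspace X. h \<in> \<Phi> y}) \<inter> topspace X"
  have "openin X V"
    unfolding V_def using K(1,2) x by (intro openin_INT) (auto intro: lsc)
  moreover have "x \<in> V" using K(2) x by (auto simp: V_def)
  moreover have "V \<subseteq> {x \<in> topspace X. topspace B \<inter> (\<Inter>h\<in>\<Phi> x. C h) \<subseteq> U}"
    using K(3) by (auto simp: V_def)
  ultimately show "\<exists>V. openin X V \<and> x \<in> V \<and> V \<subseteq> {x \<in> topspace X. topspace B \<inter> (\<Inter>h\<in>\<Phi> x. C h) \<subseteq> U}"
    by blast
qed

lemma continuous_map_vietoris:
  assumes "\<And>x. x \<in> topspace X \<Longrightarrow> closedin B (F x)"
    and "\<And>U. openin B U \<Longrightarrow> openin X {x \<in> topspace X. F x \<subseteq> U}"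
    and "\<And>U. openin B U \<Longrightarrow> openin X {x \<in> topspace X. F x \<inter> U \<noteq> {}}"
  shows "continuous_map X (vietoris B) F"
  unfolding vietoris_def
proof (rule continuous_on_generated_topo)
  fix \<U> assume "\<U> \<in> {{F. closedin B F \<and> F \<subseteq> U} | U. openin B U}
      \<union> {{F. closedin B F \<and> F \<inter> U \<noteq> {}} | U. openin B U}"
  then consider U where "openin B U" "\<U> = {F. closedin B F \<and> F \<subseteq> U}"
    | U where "openin B U" "\<U> = {F. closedin B F \<and> F \<inter> U \<noteq> {}}"
    by blast
  then show "openin X (F -` \<U> \<inter> topspace X)"
  proof cases
    case 1
    then have "F -` \<U> \<inter> topspace X = {x \<in> topspace X. F x \<subseteq> U}" using assms(1) by auto
    then show ?thesis using assms(2) 1(1) by simp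
  next
    case 2
    then have "F -` \<U> \<inter> topspace X = {x \<in> topspace X. F x \<inter> U \<noteq> {}}" using assms(1) by auto
    then show ?thesis using assms(3) 2(1) by simp
  qed
next
  have "{F. closedin B F \<and> F \<subseteq> topspace B} \<in> {{F. closedin B F \<and> F \<subseteq> U} | U. openin B U}"
    by blast
  moreover have "F x \<in> {F. closedin B F \<and> F \<subseteq> topspace B}" if "x \<in> topspace X" for x
    using assms(1) [OF that] by (simp add: closedin_subset)
  ultimately show "F ` topspace X \<subseteq> \<Union> ({{F. closedin B F \<and> F \<subseteq> U} | U. openin B U}
      \<union> {{F. closedin B F \<and> F \<inter> U \<noteq> {}} | U. openin B U})"
    by (meson UnI1 UnionI image_subsetI)
qed

lemma closedin_card_ge:
  assumes shrink: "\<And>x. x \<in> topspace X \<Longrightarrow> \<exists>V. openin X V \<and> x \<in> V \<and> (\<forall>y\<in>V. S y \<subseteq> S x)"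
    and fin: "\<And>x. finite (S x)"
  shows "closedin X {x \<in> topspace X. c \<le> card (S x)}"
  unfolding closedin_def
proof (intro conjI)
  show "openin X (topspace X - {x \<in> topspace X. c \<le> card (S x)})"
  proof (subst openin_subopen, intro ballI)
    fix x assume x: "x \<in> topspace X - {x \<in> topspace X. c \<le> card (S x)}"
    then obtain V where V: "openin X V" "x \<in> V" "\<forall>y\<in>V. S y \<subseteq> S x"
      using shrink by blast
    have "card (S x) < c" using x by auto
    then have "\<not> c \<le> card (S y)" if "y \<in> V" for y
      using card_mono [OF fin V(3) [rule_format, OF that]] by linarith
    then have "V \<subseteq> topspace X - {x \<in> topspace X. c \<le> card (S x)}"
      using openin_subset [OF V(1)] by auto
    then show "\<exists>W. openin X W \<and> x \<in> W \<and> W \<subseteq> topspace X - {x \<in> topspace X. c \<le> card (S x)}"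
      using V by blast
  qed
qed auto

lemma openin_mem_if_shrinking_card_const:
  assumes shrink: "\<And>x. x \<in> topspace X \<Longrightarrow> \<exists>V. openin X V \<and> x \<in> V \<and> (\<forall>y\<in>V. S y \<subseteq> S x)"
    and fin: "\<And>x. finite (S x)"
    and const: "\<And>x y. x \<in> topspace X \<Longrightarrow> y \<in> topspace X \<Longrightarrow> card (S x) \<le> card (S y)"
  shows "openin X {x \<in> topspace X. v \<in> S x}"
proof (subst openin_subopen, intro ballI)
  fix x assume x: "x \<in> {x \<in> topspace X. v \<in> S x}"
  then obtain V where V: "openin X V" "x \<in> V" "\<forall>y\<in>V. S y \<subseteq> S x"
    using shrink by blast
  have "S y = S x" if "y \<in> V" for y
  proof (rule card_seteq [OF fin V(3) [rule_format, OF that]])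
    show "card (S x) \<le> card (S y)"
      using const x openin_subset [OF V(1)] that by blast
  qed
  then have "V \<subseteq> {x \<in> topspace X. v \<in> S x}"
    using x openin_subset [OF V(1)] by auto
  then show "\<exists>W. openin X W \<and> x \<in> W \<and> W \<subseteq> {x \<in> topspace X. v \<in> S x}"
    using V by blast
qed

lemma minimal_G_space_le_if_superlevel_closed:
  fixes f :: "'x \<Rightarrow> 'b::preorder"
  assumes "minimal_G_space G X act"
    and closed: "\<And>c. closedin X {x \<in> topspace X. c \<le> f x}"
    and mono: "\<And>g x. g \<in> G \<Longrightarrow> x \<in> topspace X \<Longrightarrow> f x \<le> f (act g x)"
    and "x \<in> topspace X" "y \<in> topspace X"
  shows "f x \<le> f y"
proof -
  let ?Y = "{z \<in> topspace X. f x \<le> f z}"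
  have "act g z \<in> topspace X" if "g \<in> G" "z \<in> topspace X" for g z
    using assms(1) that unfolding minimal_G_space_def G_space_def continuous_map_def by blast
  then have "\<forall>g\<in>G. act g ` ?Y \<subseteq> ?Y"
    using mono order_trans by blast
  moreover have "?Y \<noteq> {}" using assms(4) by auto
  ultimately have "?Y = topspace X"
    using assms(1) closed unfolding minimal_G_space_def by blast
  then show ?thesis using assms(5) by blast
qed

section \<open>Prefixes of fixed rays\<close>

definition ray_prefixes :: "(nat \<Rightarrow> 'a) set \<Rightarrow> nat \<Rightarrow> 'a list set" where
  "ray_prefixes A n = (\<lambda>\<xi>. map \<xi> [0..<n]) ` A"

lemma finite_ray_prefixes:
  assumes "locally_finite_tree T" "A \<subseteq> tree_boundary T"
  shows "finite (ray_prefixes A n)"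
proof (rule finite_subset [OF _ finite_tree_level [OF assms(1), of n]])
  show "ray_prefixes A n \<subseteq> {v \<in> T. length v = n}"
    using assms(2) unfolding ray_prefixes_def tree_boundary_def by auto
qed

lemma ray_prefixes_locally_shrinking:
  assumes sub: "\<And>x. x \<in> topspace X \<Longrightarrow> F x \<subseteq> tree_boundary T"
    and upper: "\<And>U. openin (boundary_topology T) U \<Longrightarrow> openin X {x \<in> topspace X. F x \<subseteq> U}"
    and x: "x \<in> topspace X"
  shows "\<exists>V. openin X V \<and> x \<in> V \<and> (\<forall>y\<in>V. ray_prefixes (F y) n \<subseteq> ray_prefixes (F x) n)"
proof -
  let ?U = "{\<eta> \<in> tree_boundary T. map \<eta> [0..<n] \<in> ray_prefixes (F x) n}"
  let ?V = "{y \<in> topspace X. F y \<subseteq> ?U}"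
  have "openin X ?V" by (rule upper [OF openin_boundary_prefix])
  moreover have "x \<in> ?V" using x sub [OF x] by (auto simp: ray_prefixes_def)
  moreover have "\<forall>y\<in>?V. ray_prefixes (F y) n \<subseteq> ray_prefixes (F x) n"
    unfolding ray_prefixes_def by blast
  ultimately show ?thesis by blast
qed

lemma openin_meets_if_openin_ray_prefixes:
  assumes sub: "\<And>x. x \<in> topspace X \<Longrightarrow> F x \<subseteq> tree_boundary T"
    and prefixes: "\<And>n v. openin X {x \<in> topspace X. v \<in> ray_prefixes (F x) n}"
    and U: "openin (boundary_topology T) U"
  shows "openin X {x \<in> topspace X. F x \<inter> U \<noteq> {}}"
proof (subst openin_subopen, intro ballI)
  fix x assume x: "x \<in> {x \<in> topspace X. F x \<inter> U \<noteq> {}}"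
  then obtain \<xi> where \<xi>: "\<xi> \<in> F x" "\<xi> \<in> U" by blast
  obtain n where n: "\<And>\<eta>. \<eta> \<in> tree_boundary T \<Longrightarrow> map \<eta> [0..<n] = map \<xi> [0..<n] \<Longrightarrow> \<eta> \<in> U"
    using openin_boundary_contains_cylinder [OF U \<xi>(2)] by blast
  let ?V = "{y \<in> topspace X. map \<xi> [0..<n] \<in> ray_prefixes (F y) n}"
  have "x \<in> ?V" using x \<xi>(1) unfolding ray_prefixes_def by blast
  moreover have "?V \<subseteq> {x \<in> topspace X. F x \<inter> U \<noteq> {}}"
  proof
    fix y assume "y \<in> ?V"
    then obtain \<eta> where \<eta>: "y \<in> topspace X" "\<eta> \<in> F y" "map \<xi> [0..<n] = map \<eta> [0..<n]"
      unfolding ray_prefixes_def by blast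
    then have "\<eta> \<in> U" using n sub by (metis subsetD)
    then show "y \<in> {x \<in> topspace X. F x \<inter> U \<noteq> {}}" using \<eta> by blast
  qed
  ultimately show "\<exists>V. openin X V \<and> x \<in> V \<and> V \<subseteq> {x \<in> topspace X. F x \<inter> U \<noteq> {}}"
    using prefixes by blast
qed

lemma card_ray_prefixes_Fix_le_conj:
  assumes "locally_finite_tree T" "g \<in> tree_aut T"
  shows "card (ray_prefixes (Fix T H) n) \<le> card (ray_prefixes (Fix T ((\<lambda>h. g \<circ> h \<circ> inv g) ` H)) n)"
proof -
  have rooted: "rooted_tree T" using assms(1) by (simp add: locally_finite_tree_def)
  have "g ` ray_prefixes (Fix T H) n \<subseteq> ray_prefixes (Fix T ((\<lambda>h. g \<circ> h \<circ> inv g) ` H)) n"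
  proof
    fix w assume "w \<in> g ` ray_prefixes (Fix T H) n"
    then obtain \<xi> where \<xi>: "\<xi> \<in> Fix T H" "w = g (map \<xi> [0..<n])"
      unfolding ray_prefixes_def by blast
    then have "w = map (ray_act g \<xi>) [0..<n]"
      using map_ray_act [OF rooted assms(2)] by (simp add: Fix_def)
    then show "w \<in> ray_prefixes (Fix T ((\<lambda>h. g \<circ> h \<circ> inv g) ` H)) n"
      using ray_act_in_Fix_conj [OF rooted assms(2) \<xi>(1)] unfolding ray_prefixes_def by blast
  qed
  moreover have "finite (ray_prefixes (Fix T ((\<lambda>h. g \<circ> h \<circ> inv g) ` H)) n)"
    by (rule finite_ray_prefixes [OF assms(1)]) (auto simp: Fix_def)
  ultimately have "card (g ` ray_prefixes (Fix T H) n)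
      \<le> card (ray_prefixes (Fix T ((\<lambda>h. g \<circ> h \<circ> inv g) ` H)) n)"
    by (simp add: card_mono)
  moreover have "card (g ` ray_prefixes (Fix T H) n) = card (ray_prefixes (Fix T H) n)"
    using tree_aut_inj [OF assms(2)] by (simp add: card_image inj_on_subset)
  ultimately show ?thesis by simp
qed

theorem proposition5p27:
  fixes T :: "'a list set"
    and G :: "('a list \<Rightarrow> 'a list) set"
    and X :: "'x topology"
    and act :: "('a list \<Rightarrow> 'a list) \<Rightarrow> 'x \<Rightarrow> 'x"
    and \<Phi> :: "'x \<Rightarrow> ('a list \<Rightarrow> 'a list) set"
  assumes "locally_finite_tree T"
    and "is_subgroup G (tree_aut T)"
    and "compact_space X" and "Hausdorff_space X"
    and "minimal_G_space G X act"
    and "\<forall>x\<in>topspace X. is_subgroup (\<Phi> x) G"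
    and "\<forall>g\<in>G. \<forall>x\<in>topspace X. \<Phi> (act g x) = (\<lambda>h. g \<circ> h \<circ> inv g) ` \<Phi> x"
    and "\<forall>g\<in>G. openin X {x \<in> topspace X. g \<in> \<Phi> x}"
  shows "continuous_map X (vietoris (boundary_topology T)) (\<lambda>x. Fix T (\<Phi> x))"
proof -
  let ?F = "\<lambda>x. Fix T (\<Phi> x)"
  have G_aut: "G \<subseteq> tree_aut T" using assms(2) by (simp add: is_subgroup_def)
  have \<Phi>_G: "\<Phi> x \<subseteq> G" if "x \<in> topspace X" for x using assms(6) that by (simp add: is_subgroup_def)
  have F_sub: "?F x \<subseteq> tree_boundary T" for x by (auto simp: Fix_def)
  have upper: "openin X {x \<in> topspace X. ?F x \<subseteq> U}" if "openin (boundary_topology T) U" for U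
  proof -
    have "openin X {x \<in> topspace X. topspace (boundary_topology T) \<inter> (\<Inter>h\<in>\<Phi> x. Fix T {h}) \<subseteq> U}"
      using assms(8) \<Phi>_G
      by (intro openin_Inter_closed_subset [OF compact_space_boundary_topology [OF assms(1)]
            closedin_Fix _ that]) blast
    then show ?thesis unfolding topspace_boundary_topology Fix_eq_Inter_Fix_singleton [symmetric] .
  qed
  define S where "S n x = ray_prefixes (?F x) n" for n x
  have fin: "finite (S n x)" for n x
    unfolding S_def using F_sub by (rule finite_ray_prefixes [OF assms(1)])
  have shrink: "\<exists>V. openin X V \<and> x \<in> V \<and> (\<forall>y\<in>V. S n y \<subseteq> S n x)" if "x \<in> topspace X" for n x
    unfolding S_def by (rule ray_prefixes_locally_shrinking [OF F_sub upper that])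
  have card_le_act: "card (S n x) \<le> card (S n (act g x))" if "g \<in> G" "x \<in> topspace X" for n g x
    using card_ray_prefixes_Fix_le_conj [OF assms(1)] G_aut assms(7) that unfolding S_def by auto
  have card_const: "card (S n x) \<le> card (S n y)" if "x \<in> topspace X" "y \<in> topspace X" for n x y
    using minimal_G_space_le_if_superlevel_closed [OF assms(5) closedin_card_ge [OF shrink fin]]
      card_le_act that by blast
  have lower: "openin X {x \<in> topspace X. ?F x \<inter> U \<noteq> {}}" if "openin (boundary_topology T) U" for U
    using openin_meets_if_openin_ray_prefixes
        [OF F_sub openin_mem_if_shrinking_card_const [OF shrink fin card_const, unfolded S_def] that] .
  show ?thesis by (rule continuous_map_vietoris [OF closedin_Fix upper lower])
qed

end
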